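(* Let $z$ with $d(z,\mathcal{M})=O(\sigma)$, projection $z^*$, and $\Delta=\|z-z^*\|_2$; choose Cartesian coordinates with $z^*$ the origin, $T_{z^*}\mathcal{M}$ spanned by the first $d$ coordinate directions and $z=\Delta e_{d+1}$. Let $r_0=C\sigma$, $R=r_0+C\sigma\sqrt{\log(1/\sigma)}$, $\mathbb{D}=T_{z^*}\mathcal{M}\cap\mathcal{B}_D(z,R)$, $\nu_{\mathbb{D}}(y)=\int_{\mathbb{D}}\phi_\sigma(y-x)\,\mathrm{vol}(\mathcal{M})^{-1}dx$, and let $\tilde\nu_{\mathbb{D}}$ be its normalization to a probability density on $\mathcal{B}_D(z,r_0)$. Let $\mu^{\mathbb{B}}_{z,\mathbb{D}}=(\mu^{(1)}_{\mathbb{D}},\dots,\mu^{(D)}_{\mathbb{D}})$ be the expectation of $Y\sim\tilde\nu_{\mathbb{D}}$. Then $|\Delta-\mu^{(d+1)}_{\mathbb{D}}|\ge c\sigma$ and $\mu^{(i)}_{\mathbb{D}}=0$ for all $i\ne d+1$.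
   Context: Model: $\mathcal{M}\subset\mathbb{R}^D$ is a compact, twice-differentiable, $d$-dimensional embedded submanifold with $d$-dimensional Hausdorff volume at most $V$ and reach at least $\tau>0$; $\phi_\sigma$ is the $N(0,\sigma^2I_D)$ density. $z^*=\arg\min_{x\in\mathcal{M}}\|x-z\|_2$; $e_{d+1}$ is the $(d+1)$-th standard basis vector. $\sigma$ is sufficiently small; $c<1$, $C>1$ are constants independent of $\sigma$.
   Formalization: The hypothesis $d(z,\mathcal{M})=O(\sigma)$ becomes $a\sigma \le \Delta \le A\sigma$ for fixed constants $0 < a \le A$, with c and the smallness threshold for sigma allowed to depend on a, A and C. Apart from conventions, each condition added here is assumed in the paper as well or is needed for the statement above to hold. *)

theory Defs
  imports "HOL-Analysis.Analysis"
begin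

text \<open>Coordinates: the ambient space R^D is real^'n with D = CARD('n).
  After the change of coordinates of the paper, z* is the origin, the tangent
  space T_{z*}M is spanned by the coordinate directions indexed by a set T
  (card T = d), and z = Delta * e_k with k not in T (k plays the role of d+1).\<close>

definition gauss :: "real \<Rightarrow> real^'n \<Rightarrow> real" where
  "gauss \<sigma> v = (2 * pi * \<sigma> ^ 2) powr (- real CARD('n) / 2) * exp (- ((norm v) ^ 2) / (2 * \<sigma> ^ 2))"

definition tangent_emb :: "'n set \<Rightarrow> ('n \<Rightarrow> real) \<Rightarrow> real^'n" where
  "tangent_emb T u = (\<chi> i. if i \<in> T then u i else 0)"

text \<open>nu_D(y) = int_{T cap B(z,R)} phi_sigma(y - x) vol(M)^{-1} dx, with dx the
  d-dimensional Lebesgue measure on the plane (pushed forward from PiM T lborel).\<close>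
definition nu_disc :: "'n set \<Rightarrow> real \<Rightarrow> real^'n \<Rightarrow> real \<Rightarrow> real \<Rightarrow> real^'n \<Rightarrow> real" where
  "nu_disc T \<sigma> z R V y =
     (\<integral>u. indicator (ball z R) (tangent_emb T u) * gauss \<sigma> (y - tangent_emb T u)
        \<partial>(PiM T (\<lambda>_. lborel))) / V"

definition nu_tilde :: "'n set \<Rightarrow> real \<Rightarrow> real^'n \<Rightarrow> real \<Rightarrow> real \<Rightarrow> real \<Rightarrow> real^'n \<Rightarrow> real" where
  "nu_tilde T \<sigma> z R V r0 y =
     indicator (ball z r0) y * nu_disc T \<sigma> z R V y /
       (\<integral>w. indicator (ball z r0) w * nu_disc T \<sigma> z R V w \<partial>lborel)"

definition mean_disc :: "'n set \<Rightarrow> real \<Rightarrow> real^'n \<Rightarrow> real \<Rightarrow> real \<Rightarrow> real \<Rightarrow> real^'n" where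
  "mean_disc T \<sigma> z R V r0 = (\<integral>y. nu_tilde T \<sigma> z R V r0 y *\<^sub>R y \<partial>lborel)"

end

theory Submission
  imports Defs "HOL-Probability.Probability"
begin

text \<open>
  For \<open>i \<noteq> k\<close> the reflection \<open>y\<^sub>i \<mapsto> -y\<^sub>i\<close> fixes the ball
  \<open>B(z, r\<^sub>0)\<close> and leaves \<open>\<nu>\<^sub>D\<close> invariant (for \<open>i \<in> T\<close> substitute \<open>u\<^sub>i \<mapsto> -u\<^sub>i\<close> in the disc
  integral; for \<open>i \<notin> T\<close> the Gaussian sees \<open>y\<^sub>i\<close> only through \<open>y\<^sub>i\<^sup>2\<close>), so the \<open>i\<close>-th
  coordinate of the mean vanishes. The reflection \<open>y\<^sub>k \<mapsto> 2\<Delta> - y\<^sub>k\<close> also fixes the ball, but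
  multiplies \<open>\<nu>\<^sub>D\<close> by \<open>exp (2\<Delta>(y\<^sub>k - \<Delta>)/\<sigma>\<^sup>2)\<close>. Averaging the first moment over this
  reflection gives
  \<open>\<Delta> - \<mu>\<^sub>k = \<integral>\<^sub>B \<nu>\<^sub>D(y) (y\<^sub>k - \<Delta>) (exp (2\<Delta>(y\<^sub>k - \<Delta>)/\<sigma>\<^sup>2) - 1) dy / (2 \<integral>\<^sub>B \<nu>\<^sub>D)\<close>,
  whose integrand is nonnegative. Bounding \<open>\<nu>\<^sub>D\<close> from below on a cube of side \<open>\<asymp> \<sigma>\<close> on the
  far side of \<open>z\<close> and from above on the whole ball, all powers of \<open>\<sigma>\<close> cancel except one,
  and \<open>\<Delta> - \<mu>\<^sub>k \<ge> c \<sigma>\<close>.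
\<close>

lemma integral_ge_mult_measure:
  fixes g :: "'a \<Rightarrow> real"
  assumes "integrable M g" "A \<in> sets M" "emeasure M A < \<infinity>"
    and "\<And>x. x \<in> space M \<Longrightarrow> 0 \<le> g x" "\<And>x. x \<in> A \<Longrightarrow> c \<le> g x"
  shows "c * measure M A \<le> integral\<^sup>L M g"
proof -
  have "(\<integral>x. c * indicator A x \<partial>M) \<le> integral\<^sup>L M g"
    using assms by (intro integral_mono integrable_mult_right integrable_real_indicator)
      (auto simp: indicator_def)
  then show ?thesis
    using assms(2) by simp
qed

lemma (in product_sigma_finite) distr_PiM_componentwise:
  assumes "finite I"
    and f: "\<And>i. i \<in> I \<Longrightarrow> f i \<in> measurable (M i) (M i)"
    and distr_f: "\<And>i. i \<in> I \<Longrightarrow> distr (M i) (M i) (f i) = M i"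
  shows "distr (PiM I M) (PiM I M) (\<lambda>x. \<lambda>i\<in>I. f i (x i)) = PiM I M"
proof (rule PiM_eqI[OF assms(1)])
  have measurable: "(\<lambda>x. \<lambda>i\<in>I. f i (x i)) \<in> measurable (PiM I M) (PiM I M)"
    using f by measurable
  fix A assume A: "\<And>i. i \<in> I \<Longrightarrow> A i \<in> sets (M i)"
  have "(\<lambda>x. \<lambda>i\<in>I. f i (x i)) -` PiE I A \<inter> space (PiM I M) = PiE I (\<lambda>i. f i -` A i \<inter> space (M i))"
    by (auto simp: space_PiM PiE_iff extensional_def)
  moreover have "f i -` A i \<inter> space (M i) \<in> sets (M i)" if "i \<in> I" for i
    using measurable_sets[OF f A] that by blast
  ultimately have "emeasure (distr (PiM I M) (PiM I M) (\<lambda>x. \<lambda>i\<in>I. f i (x i))) (PiE I A)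
      = (\<Prod>i\<in>I. emeasure (M i) (f i -` A i \<inter> space (M i)))"
    using A assms(1) by (simp add: emeasure_distr[OF measurable] sets_PiM_I_finite emeasure_PiM)
  also have "\<dots> = (\<Prod>i\<in>I. emeasure (distr (M i) (M i) (f i)) (A i))"
    using A f by (intro prod.cong refl) (simp add: emeasure_distr)
  finally show "emeasure (distr (PiM I M) (PiM I M) (\<lambda>x. \<lambda>i\<in>I. f i (x i))) (PiE I A) = (\<Prod>i\<in>I. emeasure (M i) (A i))"
    using distr_f by simp
qed simp

lemma mult_exp_minus_one_nonneg:
  fixes c t :: real
  assumes "0 \<le> c"
  shows "0 \<le> t * (exp (c * t) - 1)"
proof (cases "0 \<le> t")
  case True
  then show ?thesis
    using assms by simp
next
  case False
  then have "exp (c * t) \<le> 1"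
    using assms by (simp add: mult_nonneg_nonpos)
  then show ?thesis
    using False by (simp add: mult_nonpos_nonpos)
qed

lemma mult_exp_minus_one_ge:
  fixes c t :: real
  assumes "0 \<le> t"
  shows "c * t\<^sup>2 \<le> t * (exp (c * t) - 1)"
  using mult_left_mono[OF exp_ge_add_one_self[of "c * t"] assms]
  by (simp add: power2_eq_square algebra_simps)

lemma abs_mult_exp_minus_one_le:
  fixes c t r :: real
  assumes "0 \<le> c" "\<bar>t\<bar> \<le> r"
  shows "\<bar>t * (exp (c * t) - 1)\<bar> \<le> r * (exp (c * r) + 1)"
proof -
  have "exp (c * t) \<le> exp (c * r)"
    using assms by (intro exp_mono mult_left_mono) auto
  then have "\<bar>exp (c * t) - 1\<bar> \<le> exp (c * r) + 1"
    using exp_gt_zero[of "c * t"] unfolding abs_le_iff by linarith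
  then show ?thesis
    unfolding abs_mult using assms(2) by (intro mult_mono) auto
qed

lemma linear_less_log_radius:
  fixes B C \<sigma> :: real
  assumes "0 < B" "1 < C" "0 < \<sigma>" "\<sigma> < exp (- B\<^sup>2)"
  shows "B * \<sigma> < C * \<sigma> + C * \<sigma> * sqrt (ln (1 / \<sigma>))"
proof -
  have "ln \<sigma> < - B\<^sup>2"
    using assms(3,4) by (metis ln_exp ln_less_cancel_iff exp_gt_zero)
  then have log: "B\<^sup>2 < ln (1 / \<sigma>)"
    using assms(3) by (simp add: ln_div)
  then have "B < sqrt (ln (1 / \<sigma>))"
    using assms(1) real_sqrt_less_mono by fastforce
  moreover have "0 < ln (1 / \<sigma>)"
    using log zero_le_power2[of B] by (rule order.strict_trans1[rotated])
  then have "sqrt (ln (1 / \<sigma>)) < C * sqrt (ln (1 / \<sigma>))"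
    using assms(2) by (simp add: mult_less_cancel_right1)
  ultimately have "B * \<sigma> < C * sqrt (ln (1 / \<sigma>)) * \<sigma>"
    using assms(3) by (intro mult_strict_right_mono) auto
  moreover have "0 < C * \<sigma>"
    using assms(2,3) by simp
  ultimately show ?thesis
    by (simp add: algebra_simps)
qed

lemma norm_sq_cart: "(norm (x::real^'n))\<^sup>2 = (\<Sum>i\<in>UNIV. (x $ i)\<^sup>2)"
  unfolding power2_norm_eq_inner inner_vec_def by (simp add: power2_eq_square)

lemma vec_nth_measurable[measurable]: "(\<lambda>y::real^'n::finite. y $ i) \<in> borel_measurable borel"
  by (intro borel_measurable_continuous_onI continuous_on_component continuous_on_id)

lemma ball_measurable[measurable]: "ball c r \<in> sets borel"
  by simp

lemma measure_lborel_cube: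
  fixes x :: "real^'n::finite"
  assumes "0 \<le> s"
  shows "measure lborel (cbox x (x + (\<chi> _. s))) = s ^ CARD('n)"
proof -
  have "x \<in> cbox x (x + (\<chi> _. s))"
    using assms by (simp add: mem_box_cart)
  then show ?thesis
    by (subst content_cbox_cart) auto
qed

lemma mem_shifted_cube:
  fixes y z :: "real^'n::finite"
  assumes "y \<in> cbox (z + s *\<^sub>R axis k 1) (z + s *\<^sub>R axis k 1 + (\<chi> _. s))"
  shows "norm (y - z) \<le> 2 * real CARD('n) * s" "s \<le> y $ k - z $ k"
proof -
  have lower: "(z + s *\<^sub>R axis k 1) $ j \<le> y $ j"
    and upper: "y $ j \<le> (z + s *\<^sub>R axis k 1 + (\<chi> _. s)) $ j" for j
    using assms unfolding mem_box_cart by blast+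
  have "\<bar>(y - z) $ j\<bar> \<le> 2 * s" for j
    using lower[of j] upper[of j] by (cases "j = k") (simp_all add: axis_def abs_le_iff)
  then have "(\<Sum>j\<in>UNIV. \<bar>(y - z) $ j\<bar>) \<le> (\<Sum>j\<in>(UNIV::'n set). 2 * s)"
    by (intro sum_mono)
  then show "norm (y - z) \<le> 2 * real CARD('n) * s"
    using norm_le_l1_cart[of "y - z"] by simp
  show "s \<le> y $ k - z $ k"
    using lower[of k] by (simp add: axis_def)
qed

section \<open>Coordinate reflections\<close>

definition reflect_coord :: "'n \<Rightarrow> real \<Rightarrow> real^'n \<Rightarrow> real^'n" where
  "reflect_coord i a y = (\<chi> j. if j = i then a - y $ j else y $ j)"

lemma reflect_coord_nth: "reflect_coord i a y $ j = (if j = i then a - y $ j else y $ j)"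
  by (simp add: reflect_coord_def)

lemma reflect_coord_measurable[measurable]: "reflect_coord i a \<in> borel_measurable borel"
proof -
  have "reflect_coord i a = (\<lambda>y. y + (a - 2 * (y \<bullet> axis i 1)) *\<^sub>R axis i 1)"
    unfolding reflect_coord_def by (simp add: vec_eq_iff inner_axis fun_eq_iff) (auto simp: axis_def)
  then show ?thesis
    by (simp add: borel_measurable_continuous_onI continuous_intros)
qed

lemma lborel_distr_reflect_coord:
  "distr lborel borel (reflect_coord i a) = (lborel :: (real^'n::finite) measure)"
proof -
  define c where "c b = (if b = axis i (1::real) then -1 else (1::real))" for b :: "real^'n"
  have affine: "reflect_coord i a = (\<lambda>x. a *\<^sub>R axis i 1 + (\<Sum>j\<in>Basis. (c j * (x \<bullet> j)) *\<^sub>R j))"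
  proof
    fix x :: "real^'n"
    have "(\<Sum>j\<in>Basis. (c j * (x \<bullet> j)) *\<^sub>R j) = (\<chi> j. c (axis j 1) * (x \<bullet> axis j 1))"
      by (rule vector_cart[symmetric])
    also have "\<dots> = (\<chi> j. (if j = i then -1 else 1) * x $ j)"
      by (simp add: c_def inner_axis axis_eq_axis)
    finally show "reflect_coord i a x = a *\<^sub>R axis i 1 + (\<Sum>j\<in>Basis. (c j * (x \<bullet> j)) *\<^sub>R j)"
      by (auto simp: reflect_coord_def vec_eq_iff axis_def)
  qed
  have "lborel = density (distr lborel borel (reflect_coord i a)) (\<lambda>_. ennreal (\<Prod>j\<in>Basis. \<bar>c j\<bar>))"
    unfolding affine by (rule lborel_affine_euclidean) (auto simp: c_def)
  moreover have "(\<Prod>j\<in>Basis. \<bar>c j\<bar>) = 1"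
    by (intro prod.neutral) (simp add: c_def)
  ultimately show ?thesis
    by (simp add: density_1)
qed

lemma integral_reflect_coord:
  fixes g :: "real^'n::finite \<Rightarrow> 'b::{banach, second_countable_topology}"
  assumes "g \<in> borel_measurable borel"
  shows "(\<integral>y. g (reflect_coord i a y) \<partial>lborel) = (\<integral>y. g y \<partial>lborel)"
  using integral_distr[of "reflect_coord i a" lborel borel g] assms
  by (simp add: lborel_distr_reflect_coord)

lemma integrable_reflect_coord:
  fixes g :: "real^'n::finite \<Rightarrow> 'b::{banach, second_countable_topology}"
  assumes "integrable lborel g" "g \<in> borel_measurable borel"
  shows "integrable lborel (\<lambda>y. g (reflect_coord i a y))"
  using integrable_distr_eq[of "reflect_coord i a" lborel borel g] assms
  by (simp add: lborel_distr_reflect_coord)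

lemma norm_reflect_coord_sq:
  "(norm (reflect_coord i a v))\<^sup>2 = (norm (v::real^'n::finite))\<^sup>2 - (v $ i)\<^sup>2 + (a - v $ i)\<^sup>2"
proof -
  have "(\<Sum>j\<in>UNIV - {i}. (reflect_coord i a v $ j)\<^sup>2) = (\<Sum>j\<in>UNIV - {i}. (v $ j)\<^sup>2)"
    by (intro sum.cong) (auto simp: reflect_coord_nth)
  then have "(norm (reflect_coord i a v))\<^sup>2 = (a - v $ i)\<^sup>2 + (\<Sum>j\<in>UNIV - {i}. (v $ j)\<^sup>2)"
    by (simp add: norm_sq_cart sum.remove[of UNIV i] reflect_coord_nth)
  moreover have "(norm v)\<^sup>2 = (v $ i)\<^sup>2 + (\<Sum>j\<in>UNIV - {i}. (v $ j)\<^sup>2)"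
    by (simp add: norm_sq_cart sum.remove[of UNIV i])
  ultimately show ?thesis
    by simp
qed

lemma norm_reflect_coord_zero: "norm (reflect_coord i 0 v) = norm (v::real^'n::finite)"
  using norm_reflect_coord_sq[of i 0 v] by (simp add: power2_commute power2_eq_iff_nonneg)

lemma dist_reflect_coord: "dist (reflect_coord i (2 * z $ i) y) z = dist y (z::real^'n::finite)"
proof -
  have "reflect_coord i (2 * z $ i) y - z = reflect_coord i 0 (y - z)"
    by (simp add: reflect_coord_def vec_eq_iff)
  then show ?thesis
    by (simp add: dist_norm norm_reflect_coord_zero)
qed

section \<open>The Gaussian density of the tangent disc\<close>

lemma tangent_emb_measurable[measurable]:
  "tangent_emb T \<in> borel_measurable (PiM T (\<lambda>_. lborel))"
proof -
  have "(\<lambda>u. tangent_emb T u $ i) \<in> borel_measurable (PiM T (\<lambda>_. lborel))" for i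
    by (cases "i \<in> T") (auto simp: tangent_emb_def)
  then show ?thesis
    by (subst borel_measurable_euclidean_space) (auto simp: Basis_vec_def cart_eq_inner_axis)
qed

lemma gauss_measurable[measurable]: "gauss \<sigma> \<in> borel_measurable borel"
  unfolding gauss_def by measurable

lemma gauss_eq:
  fixes v :: "real^'n::finite"
  shows "gauss \<sigma> v = gauss \<sigma> (0::real^'n) * exp (- (norm v)\<^sup>2 / (2 * \<sigma>\<^sup>2))"
  by (simp add: gauss_def)

lemma gauss_zero_pos: "0 < \<sigma> \<Longrightarrow> 0 < gauss \<sigma> (0::real^'n::finite)"
  by (simp add: gauss_def)

lemma gauss_nonneg: "0 < \<sigma> \<Longrightarrow> 0 \<le> gauss \<sigma> v"
  by (simp add: gauss_def)

lemma norm_diff_tangent_emb_sq: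
  "(norm (y - tangent_emb T u))\<^sup>2 = (\<Sum>i\<in>T. (y $ i - u i)\<^sup>2) + (\<Sum>i\<in>-T. (y $ i)\<^sup>2)"
proof -
  have "(norm (y - tangent_emb T u))\<^sup>2 = (\<Sum>i\<in>T \<union> -T. ((y - tangent_emb T u) $ i)\<^sup>2)"
    by (simp add: norm_sq_cart)
  also have "\<dots> = (\<Sum>i\<in>T. ((y - tangent_emb T u) $ i)\<^sup>2) + (\<Sum>i\<in>-T. ((y - tangent_emb T u) $ i)\<^sup>2)"
    by (rule sum.union_disjoint) auto
  finally show ?thesis
    by (simp add: tangent_emb_def)
qed

lemma norm_tangent_emb_le:
  fixes T :: "'n::finite set"
  assumes "\<And>i. i \<in> T \<Longrightarrow> \<bar>u i\<bar> \<le> s" "0 \<le> s"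
  shows "norm (tangent_emb T u) \<le> real CARD('n) * s"
proof -
  have "norm (tangent_emb T u) \<le> (\<Sum>i\<in>UNIV. \<bar>tangent_emb T u $ i\<bar>)"
    by (rule norm_le_l1_cart)
  also have "\<dots> \<le> (\<Sum>i\<in>(UNIV::'n set). s)"
    using assms by (intro sum_mono) (auto simp: tangent_emb_def)
  finally show ?thesis by simp
qed

definition disc_kernel :: "'n::finite set \<Rightarrow> real \<Rightarrow> real^'n \<Rightarrow> real \<Rightarrow> real^'n \<Rightarrow> ('n \<Rightarrow> real) \<Rightarrow> real" where
  "disc_kernel T \<sigma> z R y u = indicator (ball z R) (tangent_emb T u) * gauss \<sigma> (y - tangent_emb T u)"

lemma nu_disc_eq_integral_disc_kernel:
  "nu_disc T \<sigma> z R V y = (\<integral>u. disc_kernel T \<sigma> z R y u \<partial>PiM T (\<lambda>_. lborel)) / V"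
  by (simp add: nu_disc_def disc_kernel_def)

lemma disc_kernel_measurable[measurable]:
  "(\<lambda>(y, u). disc_kernel T \<sigma> z R y u) \<in> borel_measurable (lborel \<Otimes>\<^sub>M PiM T (\<lambda>_. lborel))"
proof -
  have emb: "(\<lambda>x. tangent_emb T (snd x)) \<in> borel_measurable (lborel \<Otimes>\<^sub>M PiM T (\<lambda>_. lborel))"
    by measurable
  have "(\<lambda>x. gauss \<sigma> (fst x - tangent_emb T (snd x))) \<in> borel_measurable (lborel \<Otimes>\<^sub>M PiM T (\<lambda>_. lborel))"
    by (rule measurable_compose[OF _ gauss_measurable]) (use emb in measurable)
  moreover have "(\<lambda>x. indicator (ball z R) (tangent_emb T (snd x)) :: real) \<in> borel_measurable (lborel \<Otimes>\<^sub>M PiM T (\<lambda>_. lborel))"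
    by (rule measurable_compose[OF emb borel_measurable_indicator]) simp
  ultimately show ?thesis
    unfolding disc_kernel_def split_beta by (intro borel_measurable_times)
qed

lemma disc_kernel_nonneg: "0 < \<sigma> \<Longrightarrow> 0 \<le> disc_kernel T \<sigma> z R y u"
  by (simp add: disc_kernel_def gauss_nonneg)

lemma disc_kernel_le_normal_density:
  fixes T :: "'n::finite set"
  assumes "0 < \<sigma>"
  shows "disc_kernel T \<sigma> z R y u
    \<le> gauss \<sigma> (0::real^'n) * sqrt (2 * pi * \<sigma>\<^sup>2) ^ card T * (\<Prod>i\<in>T. normal_density (y $ i) \<sigma> (u i))"
proof -
  have "disc_kernel T \<sigma> z R y u \<le> gauss \<sigma> (y - tangent_emb T u)"
    using assms by (simp add: disc_kernel_def indicator_def gauss_nonneg)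
  also have "\<dots> = gauss \<sigma> (0::real^'n) * exp (- ((\<Sum>i\<in>T. (u i - y $ i)\<^sup>2) + (\<Sum>i\<in>-T. (y $ i)\<^sup>2)) / (2 * \<sigma>\<^sup>2))"
    by (subst gauss_eq) (simp add: norm_diff_tangent_emb_sq power2_commute)
  also have "\<dots> \<le> gauss \<sigma> (0::real^'n) * exp (\<Sum>i\<in>T. - (u i - y $ i)\<^sup>2 / (2 * \<sigma>\<^sup>2))"
    using assms gauss_zero_pos[OF assms, where 'n='n]
    by (intro mult_left_mono) (auto simp: divide_simps sum_divide_distrib[symmetric] sum_negf intro!: sum_nonneg)
  also have "exp (\<Sum>i\<in>T. - (u i - y $ i)\<^sup>2 / (2 * \<sigma>\<^sup>2))
      = (\<Prod>i\<in>T. sqrt (2 * pi * \<sigma>\<^sup>2) * normal_density (y $ i) \<sigma> (u i))"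
    using assms by (simp add: exp_sum normal_density_def)
  also have "\<dots> = sqrt (2 * pi * \<sigma>\<^sup>2) ^ card T * (\<Prod>i\<in>T. normal_density (y $ i) \<sigma> (u i))"
    by (simp add: prod.distrib)
  finally show ?thesis
    by (simp add: mult.assoc)
qed

lemma integrable_disc_kernel:
  fixes T :: "'n::finite set"
  assumes "0 < \<sigma>"
  shows "integrable (PiM T (\<lambda>_. lborel)) (disc_kernel T \<sigma> z R y)"
proof (rule Bochner_Integration.integrable_bound)
  interpret finite_product_sigma_finite "\<lambda>_. lborel :: real measure" T
    by unfold_locales simp_all
  define g where "g u = gauss \<sigma> (0::real^'n) * sqrt (2 * pi * \<sigma>\<^sup>2) ^ card T
    * (\<Prod>i\<in>T. normal_density (y $ i) \<sigma> (u i))" for u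
  show "integrable (PiM T (\<lambda>_. lborel)) g"
    unfolding g_def using assms by (intro integrable_mult_right product_integrable_prod) auto
  show "disc_kernel T \<sigma> z R y \<in> borel_measurable (PiM T (\<lambda>_. lborel))"
    using measurable_Pair2[OF disc_kernel_measurable] by simp
  have "0 \<le> disc_kernel T \<sigma> z R y u" "disc_kernel T \<sigma> z R y u \<le> g u" for u
    unfolding g_def using assms by (rule disc_kernel_nonneg, rule disc_kernel_le_normal_density)
  then show "AE u in PiM T (\<lambda>_. lborel). norm (disc_kernel T \<sigma> z R y u) \<le> norm (g u)"
    by (intro AE_I2) (metis abs_of_nonneg order_trans real_norm_def)
qed

lemma nu_disc_nonneg: "0 < \<sigma> \<Longrightarrow> 0 < V \<Longrightarrow> 0 \<le> nu_disc T \<sigma> z R V y"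
  unfolding nu_disc_eq_integral_disc_kernel
  by (intro divide_nonneg_pos integral_nonneg_AE AE_I2 disc_kernel_nonneg)

lemma nu_disc_le:
  fixes T :: "'n::finite set"
  assumes "0 < \<sigma>" "0 < V"
  shows "nu_disc T \<sigma> z R V y \<le> gauss \<sigma> (0::real^'n) * sqrt (2 * pi * \<sigma>\<^sup>2) ^ card T / V"
proof -
  interpret finite_product_sigma_finite "\<lambda>_. lborel :: real measure" T
    by unfold_locales simp_all
  have "(\<integral>u. (\<Prod>i\<in>T. normal_density (y $ i) \<sigma> (u i)) \<partial>PiM T (\<lambda>_. lborel))
      = (\<Prod>i\<in>T. \<integral>x. normal_density (y $ i) \<sigma> x \<partial>lborel)"
    using assms by (intro product_integral_prod) auto
  also have "\<dots> = 1"
    using assms by simp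
  finally have "(\<integral>u. gauss \<sigma> (0::real^'n) * sqrt (2 * pi * \<sigma>\<^sup>2) ^ card T * (\<Prod>i\<in>T. normal_density (y $ i) \<sigma> (u i)) \<partial>PiM T (\<lambda>_. lborel))
      = gauss \<sigma> (0::real^'n) * sqrt (2 * pi * \<sigma>\<^sup>2) ^ card T"
    using assms by simp
  moreover have "(\<integral>u. disc_kernel T \<sigma> z R y u \<partial>PiM T (\<lambda>_. lborel))
      \<le> (\<integral>u. gauss \<sigma> (0::real^'n) * sqrt (2 * pi * \<sigma>\<^sup>2) ^ card T * (\<Prod>i\<in>T. normal_density (y $ i) \<sigma> (u i)) \<partial>PiM T (\<lambda>_. lborel))"
    using assms
    by (intro integral_mono integrable_disc_kernel integrable_mult_right product_integrable_prod
        disc_kernel_le_normal_density) auto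
  ultimately have "(\<integral>u. disc_kernel T \<sigma> z R y u \<partial>PiM T (\<lambda>_. lborel))
      \<le> gauss \<sigma> (0::real^'n) * sqrt (2 * pi * \<sigma>\<^sup>2) ^ card T"
    by linarith
  then show ?thesis
    using assms by (simp add: nu_disc_eq_integral_disc_kernel divide_right_mono)
qed

lemma nu_disc_measurable[measurable]:
  fixes T :: "'n::finite set"
  shows "nu_disc T \<sigma> z R V \<in> borel_measurable borel"
proof -
  interpret finite_product_sigma_finite "\<lambda>_. lborel :: real measure" T
    by unfold_locales simp_all
  have "(\<lambda>y. \<integral>u. disc_kernel T \<sigma> z R y u \<partial>PiM T (\<lambda>_. lborel)) \<in> borel_measurable lborel"
    by (rule borel_measurable_lebesgue_integral) (rule disc_kernel_measurable)
  then show ?thesis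
    by (simp add: nu_disc_eq_integral_disc_kernel[abs_def])
qed

lemma nu_disc_ge:
  fixes T :: "'n::finite set"
  assumes "0 < \<sigma>" "0 < V" and y: "norm y \<le> \<rho>" and R: "norm z + real CARD('n) * \<sigma> < R"
  shows "gauss \<sigma> (0::real^'n) * exp (- (\<rho> + real CARD('n) * \<sigma>)\<^sup>2 / (2 * \<sigma>\<^sup>2)) * (2 * \<sigma>) ^ card T / V
    \<le> nu_disc T \<sigma> z R V y"
proof -
  interpret finite_product_sigma_finite "\<lambda>_. lborel :: real measure" T
    by unfold_locales simp_all
  define U :: "('n \<Rightarrow> real) set" where "U = PiE T (\<lambda>_. {-\<sigma>..\<sigma>})"
  have U: "U \<in> sets (PiM T (\<lambda>_. lborel))"
    unfolding U_def by (rule sets_PiM_I_finite) auto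
  have emeasure_U: "emeasure (PiM T (\<lambda>_. lborel)) U = ennreal ((2 * \<sigma>) ^ card T)"
    unfolding U_def using assms(1) by (subst emeasure_PiM) (auto simp: prod_ennreal ennreal_power)
  have kernel_ge: "gauss \<sigma> (0::real^'n) * exp (- (\<rho> + real CARD('n) * \<sigma>)\<^sup>2 / (2 * \<sigma>\<^sup>2)) \<le> disc_kernel T \<sigma> z R y u"
    if "u \<in> U" for u
  proof -
    have "norm (tangent_emb T u) \<le> real CARD('n) * \<sigma>"
      using that assms(1) by (intro norm_tangent_emb_le) (auto simp: U_def PiE_iff abs_le_iff)
    moreover have "dist z (tangent_emb T u) \<le> norm z + norm (tangent_emb T u)"
      by (simp add: dist_norm norm_triangle_ineq4)
    moreover have "norm (y - tangent_emb T u) \<le> norm y + norm (tangent_emb T u)"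
      by (rule norm_triangle_ineq4)
    ultimately have "tangent_emb T u \<in> ball z R" "(norm (y - tangent_emb T u))\<^sup>2 \<le> (\<rho> + real CARD('n) * \<sigma>)\<^sup>2"
      using y R by (auto intro!: power_mono)
    then show ?thesis
      using assms(1) gauss_zero_pos[OF assms(1), where 'n='n]
      by (subst disc_kernel_def, subst gauss_eq) (auto simp: divide_simps)
  qed
  have "gauss \<sigma> (0::real^'n) * exp (- (\<rho> + real CARD('n) * \<sigma>)\<^sup>2 / (2 * \<sigma>\<^sup>2)) * measure (PiM T (\<lambda>_. lborel)) U
      \<le> (\<integral>u. disc_kernel T \<sigma> z R y u \<partial>PiM T (\<lambda>_. lborel))"
    using U emeasure_U assms(1)
    by (intro integral_ge_mult_measure integrable_disc_kernel disc_kernel_nonneg kernel_ge) auto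
  then show ?thesis
    using emeasure_U assms(1,2)
    by (simp add: nu_disc_eq_integral_disc_kernel measure_def divide_right_mono)
qed

lemma integrable_nu_disc_on_ball:
  fixes T :: "'n::finite set" and h :: "real^'n \<Rightarrow> 'b::{banach, second_countable_topology}"
  assumes "0 < \<sigma>" "0 < V" "h \<in> borel_measurable borel" "\<And>y. y \<in> ball c r \<Longrightarrow> norm (h y) \<le> H"
  shows "integrable lborel (\<lambda>y. (indicator (ball c r) y * nu_disc T \<sigma> z R V y) *\<^sub>R h y)"
proof (rule Bochner_Integration.integrable_bound)
  define M where "M = gauss \<sigma> (0::real^'n) * sqrt (2 * pi * \<sigma>\<^sup>2) ^ card T / V"
  show "integrable lborel (\<lambda>y. indicator (ball c r) y * (M * H))"
    by (intro integrable_mult_left integrable_real_indicator emeasure_bounded_finite) auto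
  show "(\<lambda>y. (indicator (ball c r) y * nu_disc T \<sigma> z R V y) *\<^sub>R h y) \<in> borel_measurable lborel"
    using assms(3) unfolding measurable_lborel1
    by (intro borel_measurable_scaleR borel_measurable_times borel_measurable_indicator) auto
  have "norm ((indicator (ball c r) y * nu_disc T \<sigma> z R V y) *\<^sub>R h y) \<le> norm (indicator (ball c r) y * (M * H))"
    for y
  proof (cases "y \<in> ball c r")
    case True
    have "0 \<le> nu_disc T \<sigma> z R V y" "nu_disc T \<sigma> z R V y \<le> M"
      unfolding M_def using assms(1,2) by (rule nu_disc_nonneg, rule nu_disc_le)
    then have "nu_disc T \<sigma> z R V y * norm (h y) \<le> M * H"
      using assms(4)[OF True] by (intro mult_mono) auto
    then show ?thesis
      using True \<open>0 \<le> nu_disc T \<sigma> z R V y\<close> by simp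
  qed simp
  then show "AE y in lborel. norm ((indicator (ball c r) y * nu_disc T \<sigma> z R V y) *\<^sub>R h y)
      \<le> norm (indicator (ball c r) y * (M * H))"
    by simp
qed

lemma integral_ball_nu_disc_le:
  fixes T :: "'n::finite set"
  assumes "0 < \<sigma>" "0 < V" "0 \<le> r"
  shows "(\<integral>y. indicator (ball c r) y * nu_disc T \<sigma> z R V y \<partial>lborel)
    \<le> gauss \<sigma> (0::real^'n) * sqrt (2 * pi * \<sigma>\<^sup>2) ^ card T / V * (2 * r) ^ CARD('n)"
proof -
  define M where "M = gauss \<sigma> (0::real^'n) * sqrt (2 * pi * \<sigma>\<^sup>2) ^ card T / V"
  define B where "B = cbox (c - (\<chi> _. r)) (c - (\<chi> _. r) + (\<chi> _. 2 * r))"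
  have "ball c r \<subseteq> B"
  proof
    fix y assume "y \<in> ball c r"
    then have "\<bar>(y - c) $ j\<bar> < r" for j
      using component_le_norm_cart[of "y - c" j] by (simp add: dist_norm norm_minus_commute)
    then have "c $ j - r \<le> y $ j \<and> y $ j \<le> c $ j - r + 2 * r" for j
      using abs_less_iff[of "y $ j - c $ j" r] by force
    then show "y \<in> B"
      by (simp add: B_def mem_box_cart)
  qed
  then have "indicator (ball c r) y * nu_disc T \<sigma> z R V y \<le> M * indicator B y" for y
    using nu_disc_nonneg[OF assms(1,2)] nu_disc_le[OF assms(1,2)] gauss_zero_pos[OF assms(1), where 'n='n] assms(2)
    by (auto simp: M_def indicator_def)
  then have "(\<integral>y. indicator (ball c r) y * nu_disc T \<sigma> z R V y \<partial>lborel) \<le> (\<integral>y. M * indicator B y \<partial>lborel)"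
    using assms(1,2) integrable_nu_disc_on_ball[OF assms(1,2), of "\<lambda>_. 1::real" c r 1 T z R]
    by (intro integral_mono) (auto simp: B_def intro!: integrable_real_indicator emeasure_bounded_finite)
  also have "\<dots> = M * (2 * r) ^ CARD('n)"
    using assms(3) by (simp add: B_def measure_lborel_cube)
  finally show ?thesis
    by (simp add: M_def)
qed

lemma nu_disc_reflect_coord_normal:
  fixes T :: "'n::finite set"
  assumes "i \<notin> T"
  shows "nu_disc T \<sigma> z R V (reflect_coord i a y)
    = nu_disc T \<sigma> z R V y * exp (((y $ i)\<^sup>2 - (a - y $ i)\<^sup>2) / (2 * \<sigma>\<^sup>2))"
proof -
  have kernel: "disc_kernel T \<sigma> z R (reflect_coord i a y) u
      = disc_kernel T \<sigma> z R y u * exp (((y $ i)\<^sup>2 - (a - y $ i)\<^sup>2) / (2 * \<sigma>\<^sup>2))" for u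
  proof -
    have "reflect_coord i a y - tangent_emb T u = reflect_coord i a (y - tangent_emb T u)"
      "(y - tangent_emb T u) $ i = y $ i"
      using assms by (auto simp: reflect_coord_def tangent_emb_def vec_eq_iff)
    then have "- (norm (reflect_coord i a y - tangent_emb T u))\<^sup>2 / (2 * \<sigma>\<^sup>2)
        = - (norm (y - tangent_emb T u))\<^sup>2 / (2 * \<sigma>\<^sup>2) + ((y $ i)\<^sup>2 - (a - y $ i)\<^sup>2) / (2 * \<sigma>\<^sup>2)"
      by (simp add: norm_reflect_coord_sq add_divide_distrib diff_divide_distrib)
    then have "exp (- (norm (reflect_coord i a y - tangent_emb T u))\<^sup>2 / (2 * \<sigma>\<^sup>2))
        = exp (- (norm (y - tangent_emb T u))\<^sup>2 / (2 * \<sigma>\<^sup>2)) * exp (((y $ i)\<^sup>2 - (a - y $ i)\<^sup>2) / (2 * \<sigma>\<^sup>2))"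
      by (metis exp_add)
    then show ?thesis
      by (simp add: disc_kernel_def gauss_def)
  qed
  show ?thesis
    by (simp add: nu_disc_eq_integral_disc_kernel kernel)
qed

lemma nu_disc_reflect_coord_tangent:
  fixes T :: "'n::finite set"
  assumes i: "i \<in> T" and z: "z $ i = 0"
  shows "nu_disc T \<sigma> z R V (reflect_coord i 0 y) = nu_disc T \<sigma> z R V y"
proof -
  interpret product_sigma_finite "\<lambda>_. lborel :: real measure"
    by unfold_locales
  define f :: "'n \<Rightarrow> real \<Rightarrow> real" where "f j x = (if j = i then - x else x)" for j x
  define flip where "flip u = (\<lambda>j\<in>T. f j (u j))" for u :: "'n \<Rightarrow> real"
  have distr_flip: "distr (PiM T (\<lambda>_. lborel)) (PiM T (\<lambda>_. lborel)) flip = PiM T (\<lambda>_. lborel)"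
    unfolding flip_def
  proof (rule distr_PiM_componentwise)
    show "f j \<in> measurable lborel lborel" for j
      by (cases "j = i") (simp_all add: f_def[abs_def])
    show "distr lborel lborel (f j) = lborel" for j
      using lborel_distr_uminus distr_cong[of lborel lborel lborel borel "uminus :: real \<Rightarrow> real"] distr_id[of lborel]
      by (cases "j = i") (simp_all add: f_def[abs_def])
  qed simp
  have flip_measurable: "flip \<in> measurable (PiM T (\<lambda>_. lborel)) (PiM T (\<lambda>_. lborel))"
    unfolding flip_def f_def by measurable
  have emb_flip: "tangent_emb T (flip u) = reflect_coord i 0 (tangent_emb T u)" for u
    using i by (auto simp: tangent_emb_def reflect_coord_def flip_def f_def vec_eq_iff)
  have kernel: "disc_kernel T \<sigma> z R (reflect_coord i 0 y) u = disc_kernel T \<sigma> z R y (flip u)" for u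
  proof -
    have "reflect_coord i 0 y - tangent_emb T u = reflect_coord i 0 (y - tangent_emb T (flip u))"
      using i by (auto simp: tangent_emb_def reflect_coord_def flip_def f_def vec_eq_iff)
    moreover have "dist (tangent_emb T (flip u)) z = dist (tangent_emb T u) z"
      using dist_reflect_coord[of i z "tangent_emb T u"] z by (simp add: emb_flip)
    ultimately show ?thesis
      by (simp add: disc_kernel_def gauss_def norm_reflect_coord_zero indicator_def dist_commute)
  qed
  have "(\<integral>u. disc_kernel T \<sigma> z R y (flip u) \<partial>PiM T (\<lambda>_. lborel))
      = (\<integral>u. disc_kernel T \<sigma> z R y u \<partial>PiM T (\<lambda>_. lborel))"
    using integral_distr[OF flip_measurable, of "disc_kernel T \<sigma> z R y"]
      measurable_Pair2[OF disc_kernel_measurable] by (simp add: distr_flip)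
  then show ?thesis
    by (simp add: nu_disc_eq_integral_disc_kernel kernel)
qed

lemma nu_disc_reflect_coord_zero:
  fixes T :: "'n::finite set"
  assumes "z $ i = 0"
  shows "nu_disc T \<sigma> z R V (reflect_coord i 0 y) = nu_disc T \<sigma> z R V y"
  using assms nu_disc_reflect_coord_tangent[of i T z] nu_disc_reflect_coord_normal[of i T]
  by (cases "i \<in> T") simp_all

section \<open>The mean of the normalised density\<close>

text \<open>No hypothesis on the mass is needed: if it vanishes, both sides are \<open>0\<close> because \<open>x / 0 = 0\<close>.\<close>

lemma mean_disc_nth:
  fixes T :: "'n::finite set"
  assumes "0 < \<sigma>" "0 < V"
  shows "mean_disc T \<sigma> z R V r0 $ i
    = (\<integral>y. indicator (ball z r0) y * nu_disc T \<sigma> z R V y * y $ i \<partial>lborel)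
      / (\<integral>y. indicator (ball z r0) y * nu_disc T \<sigma> z R V y \<partial>lborel)"
proof -
  define Z where "Z = (\<integral>y. indicator (ball z r0) y * nu_disc T \<sigma> z R V y \<partial>lborel)"
  have "norm y \<le> norm z + r0" if "y \<in> ball z r0" for y :: "real^'n"
    using that norm_triangle_sub[of y z] by (simp add: dist_norm norm_minus_commute)
  then have "integrable lborel (\<lambda>y. (indicator (ball z r0) y * nu_disc T \<sigma> z R V y) *\<^sub>R y)"
    using assms by (intro integrable_nu_disc_on_ball[where H = "norm z + r0"]) auto
  then have "(\<integral>y. ((indicator (ball z r0) y * nu_disc T \<sigma> z R V y) *\<^sub>R y) \<bullet> axis i 1 \<partial>lborel)
      = (\<integral>y. (indicator (ball z r0) y * nu_disc T \<sigma> z R V y) *\<^sub>R y \<partial>lborel) \<bullet> axis i 1"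
    by (rule integral_inner_left)
  moreover have "mean_disc T \<sigma> z R V r0
      = (1 / Z) *\<^sub>R (\<integral>y. (indicator (ball z r0) y * nu_disc T \<sigma> z R V y) *\<^sub>R y \<partial>lborel)"
    by (simp add: mean_disc_def nu_tilde_def Z_def[symmetric] divide_inverse mult.commute
        flip: integral_scaleR_right)
  ultimately show ?thesis
    by (simp add: Z_def cart_eq_inner_axis)
qed

lemma mean_disc_nth_eq_0:
  fixes T :: "'n::finite set"
  assumes "0 < \<sigma>" "0 < V" "z $ i = 0"
  shows "mean_disc T \<sigma> z R V r0 $ i = 0"
proof -
  define g where "g y = indicator (ball z r0) y * nu_disc T \<sigma> z R V y * y $ i" for y
  have "indicator (ball z r0) (reflect_coord i 0 y) = (indicator (ball z r0) y :: real)" for y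
    using dist_reflect_coord[of i z y] assms(3) by (simp add: indicator_def dist_commute)
  then have odd: "g (reflect_coord i 0 y) = - g y" for y
    using assms(3) by (simp add: g_def nu_disc_reflect_coord_zero reflect_coord_nth)
  have "g \<in> borel_measurable borel"
    unfolding g_def[abs_def] by measurable
  then have "integral\<^sup>L lborel g = - integral\<^sup>L lborel g"
    using integral_reflect_coord[of g i 0] by (simp add: odd)
  then show ?thesis
    using assms(1,2) unfolding g_def[abs_def] by (simp add: mean_disc_nth)
qed

lemma integral_nu_disc_normal_moment:
  fixes T :: "'n::finite set" and r R :: real
  assumes "k \<notin> T" "0 < \<sigma>" "0 < V" "z $ k = \<Delta>"
  defines "w \<equiv> \<lambda>y. indicator (ball z r) y * nu_disc T \<sigma> z R V y"
  shows "(\<integral>y. w y * ((y $ k - \<Delta>) * (exp (2 * \<Delta> / \<sigma>\<^sup>2 * (y $ k - \<Delta>)) - 1)) \<partial>lborel)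
    = 2 * (\<integral>y. w y * (\<Delta> - y $ k) \<partial>lborel)"
proof -
  define E where "E y = exp (2 * \<Delta> / \<sigma>\<^sup>2 * (y $ k - \<Delta>))" for y :: "real^'n"
  define G where "G y = w y * (y $ k - \<Delta>)" for y
  have "indicator (ball z r) (reflect_coord k (2 * \<Delta>) y) = (indicator (ball z r) y :: real)" for y
    using dist_reflect_coord[of k z y] assms(4) by (simp add: indicator_def dist_commute)
  moreover have "((y $ k)\<^sup>2 - (2 * \<Delta> - y $ k)\<^sup>2) / (2 * \<sigma>\<^sup>2) = 2 * \<Delta> / \<sigma>\<^sup>2 * (y $ k - \<Delta>)" for y :: "real^'n"
    using assms(2) by (simp add: field_simps power2_eq_square)
  ultimately have w_reflect: "w (reflect_coord k (2 * \<Delta>) y) = w y * E y" for y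
    using assms(1) by (simp add: w_def E_def nu_disc_reflect_coord_normal)
  have G_reflect: "G (reflect_coord k (2 * \<Delta>) y) = - (w y * E y * (y $ k - \<Delta>))" for y
    by (simp add: G_def w_reflect reflect_coord_nth) (simp add: algebra_simps)
  have G_measurable: "G \<in> borel_measurable borel"
    unfolding G_def[abs_def] w_def by measurable
  have "norm (y $ k - \<Delta>) \<le> r" if "y \<in> ball z r" for y :: "real^'n"
    using that component_le_norm_cart[of "y - z" k] assms(4) by (simp add: dist_norm norm_minus_commute)
  then have G_integrable: "integrable lborel G"
    using integrable_nu_disc_on_ball[OF assms(2,3), of "\<lambda>y. y $ k - \<Delta>" z r r T z R]
    unfolding G_def[abs_def] w_def by simp
  have "integrable lborel (\<lambda>y. w y * E y * (y $ k - \<Delta>))"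
    using integrable_reflect_coord[OF G_integrable G_measurable, of k "2 * \<Delta>"] by (simp add: G_reflect)
  moreover have "integral\<^sup>L lborel G = - (\<integral>y. w y * E y * (y $ k - \<Delta>) \<partial>lborel)"
    using integral_reflect_coord[OF G_measurable, of k "2 * \<Delta>"] by (simp add: G_reflect)
  ultimately have "(\<integral>y. w y * E y * (y $ k - \<Delta>) - G y \<partial>lborel) = - 2 * integral\<^sup>L lborel G"
    using G_integrable by simp
  moreover have "(\<integral>y. w y * ((y $ k - \<Delta>) * (E y - 1)) \<partial>lborel)
      = (\<integral>y. w y * E y * (y $ k - \<Delta>) - G y \<partial>lborel)"
    by (rule Bochner_Integration.integral_cong) (simp_all add: G_def algebra_simps)
  moreover have "(\<integral>y. w y * (\<Delta> - y $ k) \<partial>lborel) = (\<integral>y. - G y \<partial>lborel)"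
    by (rule Bochner_Integration.integral_cong) (simp_all add: G_def algebra_simps)
  ultimately show ?thesis
    unfolding E_def by simp
qed

lemma mean_disc_normal_gap_eq:
  fixes T :: "'n::finite set"
  assumes "k \<notin> T" "0 < \<sigma>" "0 < V" "z $ k = \<Delta>"
    and Z: "(\<integral>y. indicator (ball z r) y * nu_disc T \<sigma> z R V y \<partial>lborel) \<noteq> 0"
  shows "\<Delta> - mean_disc T \<sigma> z R V r $ k
    = (\<integral>y. indicator (ball z r) y * nu_disc T \<sigma> z R V y
          * ((y $ k - \<Delta>) * (exp (2 * \<Delta> / \<sigma>\<^sup>2 * (y $ k - \<Delta>)) - 1)) \<partial>lborel)
      / (2 * (\<integral>y. indicator (ball z r) y * nu_disc T \<sigma> z R V y \<partial>lborel))"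
proof -
  define w where "w y = indicator (ball z r) y * nu_disc T \<sigma> z R V y" for y
  have "norm y \<le> norm z + r" if "y \<in> ball z r" for y :: "real^'n"
    using that norm_triangle_sub[of y z] by (simp add: dist_norm norm_minus_commute)
  then have "norm (y $ k) \<le> norm z + r" if "y \<in> ball z r" for y :: "real^'n"
    using that component_le_norm_cart[of y k] by fastforce
  then have "integrable lborel (\<lambda>y. w y * y $ k)" "integrable lborel w"
    using integrable_nu_disc_on_ball[OF assms(2,3), of "\<lambda>y. y $ k" z r "norm z + r" T z R]
      integrable_nu_disc_on_ball[OF assms(2,3), of "\<lambda>_. 1::real" z r 1 T z R]
    by (simp_all add: w_def[abs_def])
  then have "(\<integral>y. w y * (\<Delta> - y $ k) \<partial>lborel) = \<Delta> * integral\<^sup>L lborel w - (\<integral>y. w y * y $ k \<partial>lborel)"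
    by (simp add: right_diff_distrib)
  moreover have "mean_disc T \<sigma> z R V r $ k = (\<integral>y. w y * y $ k \<partial>lborel) / integral\<^sup>L lborel w"
    unfolding w_def[abs_def] by (rule mean_disc_nth[OF assms(2,3)])
  moreover have "(\<integral>y. w y * ((y $ k - \<Delta>) * (exp (2 * \<Delta> / \<sigma>\<^sup>2 * (y $ k - \<Delta>)) - 1)) \<partial>lborel)
      = 2 * (\<integral>y. w y * (\<Delta> - y $ k) \<partial>lborel)"
    unfolding w_def[abs_def] by (rule integral_nu_disc_normal_moment[OF assms(1-4)])
  moreover have "integral\<^sup>L lborel w \<noteq> 0"
    using Z by (simp add: w_def[abs_def])
  ultimately have "\<Delta> - mean_disc T \<sigma> z R V r $ k
      = (\<integral>y. w y * ((y $ k - \<Delta>) * (exp (2 * \<Delta> / \<sigma>\<^sup>2 * (y $ k - \<Delta>)) - 1)) \<partial>lborel)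
        / (2 * integral\<^sup>L lborel w)"
    by (simp add: field_simps)
  then show ?thesis
    unfolding w_def[abs_def] .
qed

text \<open>In \<open>gap_const a A C d n\<close>, \<open>d\<close> and \<open>n\<close> are the dimensions of the tangent plane and of the
  ambient space.\<close>

definition gap_const :: "real \<Rightarrow> real \<Rightarrow> real \<Rightarrow> nat \<Rightarrow> nat \<Rightarrow> real" where
  "gap_const a A C d n =
     a * exp (- (A + C + real n)\<^sup>2 / 2) * (2 / sqrt (2 * pi)) ^ d * (C / (4 * real n))\<^sup>2 / (8 * real n) ^ n"

lemma gap_const_pos: "0 < a \<Longrightarrow> 0 < C \<Longrightarrow> 0 < n \<Longrightarrow> 0 < gap_const a A C d n"
  by (simp add: gap_const_def)

lemma gap_const_eq:
  fixes K V \<sigma> C a A :: real and d n :: nat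
  assumes "0 < K" "0 < V" "0 < \<sigma>" "0 < C" "0 < n"
  defines "s \<equiv> C * \<sigma> / (4 * real n)"
  shows "K * exp (- ((A + C) * \<sigma> + real n * \<sigma>)\<^sup>2 / (2 * \<sigma>\<^sup>2)) * (2 * \<sigma>) ^ d / V * (2 * a / \<sigma> * s\<^sup>2) * s ^ n
      / (2 * (K * sqrt (2 * pi * \<sigma>\<^sup>2) ^ d / V * (2 * (C * \<sigma>)) ^ n))
    = gap_const a A C d n * \<sigma>"
proof -
  have "- ((A + C) * \<sigma> + real n * \<sigma>)\<^sup>2 / (2 * \<sigma>\<^sup>2) = - (A + C + real n)\<^sup>2 / 2"
    using assms by (simp add: field_simps power2_eq_square)
  moreover have "sqrt (2 * pi * \<sigma>\<^sup>2) = sqrt (2 * pi) * \<sigma>"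
    using assms by (simp add: real_sqrt_mult)
  moreover have "(8::real) ^ n = 2 ^ n * 4 ^ n"
    by (simp flip: power_mult_distrib)
  ultimately show ?thesis
    using assms by (simp add: gap_const_def power_mult_distrib power_divide field_simps power2_eq_square)
qed

lemma nu_disc_ge_on_cube:
  fixes T :: "'n::finite set" and k :: 'n and A C \<sigma> \<Delta> :: real
  defines "z \<equiv> \<Delta> *\<^sub>R axis k 1" and "s \<equiv> C * \<sigma> / (4 * real CARD('n))"
  assumes "0 < C" "0 < \<sigma>" "0 < V" "0 < \<Delta>" "\<Delta> \<le> A * \<sigma>" and R: "(A + CARD('n)) * \<sigma> < R"
    and y: "y \<in> cbox (z + s *\<^sub>R axis k 1) (z + s *\<^sub>R axis k 1 + (\<chi> _. s))"
  shows "y \<in> ball z (C * \<sigma>)"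
    and "gauss \<sigma> (0::real^'n) * exp (- ((A + C) * \<sigma> + real CARD('n) * \<sigma>)\<^sup>2 / (2 * \<sigma>\<^sup>2)) * (2 * \<sigma>) ^ card T / V
      \<le> nu_disc T \<sigma> z R V y"
proof -
  have "norm (y - z) \<le> 2 * real CARD('n) * s"
    by (rule mem_shifted_cube(1)[OF y])
  then have yz: "norm (y - z) \<le> C * \<sigma> / 2"
    by (simp add: s_def)
  then show "y \<in> ball z (C * \<sigma>)"
    using mult_pos_pos[OF assms(3,4)] by (simp add: dist_norm norm_minus_commute)
  have "norm z = \<Delta>"
    using assms(6) by (simp add: z_def)
  then have "norm y \<le> (A + C) * \<sigma>"
    using norm_triangle_sub[of y z] yz assms(7) mult_pos_pos[OF assms(3,4)] by (simp add: algebra_simps)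
  moreover have "norm z + real CARD('n) * \<sigma> < R"
    using \<open>norm z = \<Delta>\<close> assms(7) R by (simp add: algebra_simps)
  ultimately show "gauss \<sigma> (0::real^'n) * exp (- ((A + C) * \<sigma> + real CARD('n) * \<sigma>)\<^sup>2 / (2 * \<sigma>\<^sup>2))
      * (2 * \<sigma>) ^ card T / V \<le> nu_disc T \<sigma> z R V y"
    using assms(4,5) by (intro nu_disc_ge)
qed

lemma ball_integrals_nu_disc_ge:
  fixes T :: "'n::finite set" and k :: 'n and a A C \<sigma> \<Delta> V R :: real
  defines "z \<equiv> \<Delta> *\<^sub>R axis k 1" and "s \<equiv> C * \<sigma> / (4 * real CARD('n))"
  defines "w \<equiv> \<lambda>y. indicator (ball z (C * \<sigma>)) y * nu_disc T \<sigma> z R V y"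
    and "lo \<equiv> gauss \<sigma> (0::real^'n) * exp (- ((A + C) * \<sigma> + real CARD('n) * \<sigma>)\<^sup>2 / (2 * \<sigma>\<^sup>2))
      * (2 * \<sigma>) ^ card T / V"
  assumes "0 < C" "0 < a" "0 < \<sigma>" "a * \<sigma> \<le> \<Delta>" "\<Delta> \<le> A * \<sigma>" "0 < V"
    and R: "(A + CARD('n)) * \<sigma> < R"
  shows "lo * s ^ CARD('n) \<le> integral\<^sup>L lborel w"
    and "lo * (2 * a / \<sigma> * s\<^sup>2) * s ^ CARD('n)
      \<le> (\<integral>y. w y * ((y $ k - \<Delta>) * (exp (2 * \<Delta> / \<sigma>\<^sup>2 * (y $ k - \<Delta>)) - 1)) \<partial>lborel)"
proof -
  define Q where "Q = cbox (z + s *\<^sub>R axis k 1) (z + s *\<^sub>R axis k 1 + (\<chi> _. s))"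
  define h where "h y = (y $ k - \<Delta>) * (exp (2 * \<Delta> / \<sigma>\<^sup>2 * (y $ k - \<Delta>)) - 1)" for y :: "real^'n"
  have \<Delta>: "0 < \<Delta>" "z $ k = \<Delta>"
    using mult_pos_pos[OF assms(6,7)] assms(8) by (simp_all add: z_def)
  have s: "0 < s"
    using assms(5,7) by (simp add: s_def)
  have w_nonneg: "0 \<le> w y" for y
    using nu_disc_nonneg[OF assms(7,10), of T z R y] by (simp add: w_def)
  have h_nonneg: "0 \<le> h y" for y
    unfolding h_def using \<Delta>(1) by (intro mult_exp_minus_one_nonneg) simp
  have in_Q: "lo \<le> w y" "s \<le> y $ k - \<Delta>" if "y \<in> Q" for y
    using nu_disc_ge_on_cube[OF assms(5,7,10) \<Delta>(1) assms(9) R, where y = y] mem_shifted_cube(2)[of y z s k] that \<Delta>(2)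
    by (simp_all add: w_def lo_def Q_def z_def s_def)
  have h_ge: "2 * a / \<sigma> * s\<^sup>2 \<le> h y" if "y \<in> Q" for y
  proof -
    have "2 * a / \<sigma> * s\<^sup>2 \<le> 2 * \<Delta> / \<sigma>\<^sup>2 * (y $ k - \<Delta>)\<^sup>2"
      using assms(6-8) \<Delta>(1) in_Q(2)[OF that] s
      by (intro mult_mono power_mono) (simp_all add: field_simps power2_eq_square)
    also have "\<dots> \<le> h y"
      unfolding h_def using in_Q(2)[OF that] s by (intro mult_exp_minus_one_ge) simp
    finally show ?thesis .
  qed
  have Q: "Q \<in> sets lborel" "emeasure lborel Q < \<infinity>" "measure lborel Q = s ^ CARD('n)"
    unfolding Q_def using s emeasure_lborel_cbox_finite
    by (simp_all add: measure_lborel_cube del: emeasure_lborel_cbox_eq)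
  have "\<bar>h y\<bar> \<le> C * \<sigma> * (exp (2 * \<Delta> / \<sigma>\<^sup>2 * (C * \<sigma>)) + 1)" if "y \<in> ball z (C * \<sigma>)" for y
    unfolding h_def using that \<Delta> component_le_norm_cart[of "y - z" k]
    by (intro abs_mult_exp_minus_one_le) (simp_all add: dist_norm norm_minus_commute)
  then have integrable: "integrable lborel w" "integrable lborel (\<lambda>y. w y * h y)"
    using integrable_nu_disc_on_ball[OF assms(7,10), of "\<lambda>_. 1::real" z "C * \<sigma>" 1 T z R]
      integrable_nu_disc_on_ball[OF assms(7,10), of h z "C * \<sigma>" _ T z R]
    by (auto simp: w_def h_def[abs_def])
  show "lo * s ^ CARD('n) \<le> integral\<^sup>L lborel w"
    using integrable Q in_Q w_nonneg by (subst Q(3)[symmetric], intro integral_ge_mult_measure) auto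
  have "lo * (2 * a / \<sigma> * s\<^sup>2) * s ^ CARD('n) \<le> (\<integral>y. w y * h y \<partial>lborel)"
    using integrable Q in_Q h_ge w_nonneg h_nonneg assms(6,7)
    by (subst Q(3)[symmetric], intro integral_ge_mult_measure mult_mono) auto
  then show "lo * (2 * a / \<sigma> * s\<^sup>2) * s ^ CARD('n)
      \<le> (\<integral>y. w y * ((y $ k - \<Delta>) * (exp (2 * \<Delta> / \<sigma>\<^sup>2 * (y $ k - \<Delta>)) - 1)) \<partial>lborel)"
    by (simp add: h_def)
qed

lemma mean_disc_gap:
  fixes T :: "'n::finite set" and a A C \<sigma> \<Delta> :: real
  assumes "k \<notin> T" "0 < C" "0 < a" "0 < \<sigma>" "a * \<sigma> \<le> \<Delta>" "\<Delta> \<le> A * \<sigma>" "0 < V"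
    and R: "(A + CARD('n)) * \<sigma> < R"
  shows "gap_const a A C (card T) CARD('n) * \<sigma> \<le> \<Delta> - mean_disc T \<sigma> (\<Delta> *\<^sub>R axis k 1) R V (C * \<sigma>) $ k"
proof -
  define z :: "real^'n" where "z = \<Delta> *\<^sub>R axis k 1"
  define s where "s = C * \<sigma> / (4 * real CARD('n))"
  define w where "w = (\<lambda>y. indicator (ball z (C * \<sigma>)) y * nu_disc T \<sigma> z R V y)"
  define J where "J = (\<integral>y. indicator (ball z (C * \<sigma>)) y * nu_disc T \<sigma> z R V y
    * ((y $ k - \<Delta>) * (exp (2 * \<Delta> / \<sigma>\<^sup>2 * (y $ k - \<Delta>)) - 1)) \<partial>lborel)"
  define lo where "lo = gauss \<sigma> (0::real^'n) * exp (- ((A + C) * \<sigma> + real CARD('n) * \<sigma>)\<^sup>2 / (2 * \<sigma>\<^sup>2))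
    * (2 * \<sigma>) ^ card T / V"
  define hi where "hi = gauss \<sigma> (0::real^'n) * sqrt (2 * pi * \<sigma>\<^sup>2) ^ card T / V"
  have J_ge: "lo * (2 * a / \<sigma> * s\<^sup>2) * s ^ CARD('n) \<le> J"
    using ball_integrals_nu_disc_ge(2)[OF assms(2-7) R, where k = k and T = T]
    unfolding J_def z_def s_def lo_def .
  have "0 < lo * s ^ CARD('n)"
    using assms(2,4,7) gauss_zero_pos[OF assms(4), where 'n='n] by (simp add: s_def lo_def)
  also have "lo * s ^ CARD('n) \<le> integral\<^sup>L lborel w"
    using ball_integrals_nu_disc_ge(1)[OF assms(2-7) R, where k = k and T = T]
    unfolding w_def z_def s_def lo_def .
  finally have Z_pos: "0 < integral\<^sup>L lborel w" .
  have Z_le: "integral\<^sup>L lborel w \<le> hi * (2 * (C * \<sigma>)) ^ CARD('n)"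
    unfolding w_def hi_def using assms(2,4,7) by (intro integral_ball_nu_disc_le) auto
  have "0 \<le> J"
    unfolding J_def using nu_disc_nonneg[OF assms(4,7)] mult_pos_pos[OF assms(3,4)] assms(5)
    by (intro integral_nonneg_AE AE_I2 mult_nonneg_nonneg mult_exp_minus_one_nonneg) auto
  have "gap_const a A C (card T) CARD('n) * \<sigma>
      = lo * (2 * a / \<sigma> * s\<^sup>2) * s ^ CARD('n) / (2 * (hi * (2 * (C * \<sigma>)) ^ CARD('n)))"
    unfolding lo_def hi_def s_def
    by (rule gap_const_eq[OF gauss_zero_pos[OF assms(4)] assms(7,4,2), symmetric]) simp
  also have "\<dots> \<le> J / (2 * integral\<^sup>L lborel w)"
    using J_ge Z_le Z_pos \<open>0 \<le> J\<close> by (intro frac_le) auto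
  also have "\<dots> = \<Delta> - mean_disc T \<sigma> z R V (C * \<sigma>) $ k"
    using mean_disc_normal_gap_eq[OF assms(1,4,7), of z \<Delta>] Z_pos
    unfolding J_def w_def by (simp add: z_def mult.assoc)
  finally show ?thesis
    by (simp add: z_def)
qed

theorem lemma3p4:
  fixes T :: "'n::finite set" and k :: 'n and C a A :: real
  assumes "k \<notin> T" and "C > 1" and "0 < a" and "a \<le> A"
  shows "\<exists>c \<sigma>0. 0 < c \<and> c < 1 \<and> 0 < \<sigma>0 \<and>
    (\<forall>\<sigma> \<Delta> V. 0 < \<sigma> \<and> \<sigma> < \<sigma>0 \<and> a * \<sigma> \<le> \<Delta> \<and> \<Delta> \<le> A * \<sigma> \<and> 0 < V \<longrightarrow>
      (let z = \<Delta> *\<^sub>R axis k 1;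
           r0 = C * \<sigma>;
           R = r0 + C * \<sigma> * sqrt (ln (1 / \<sigma>));
           \<mu> = mean_disc T \<sigma> z R V r0
       in \<bar>\<Delta> - \<mu> $ k\<bar> \<ge> c * \<sigma> \<and> (\<forall>i. i \<noteq> k \<longrightarrow> \<mu> $ i = 0)))"
proof -
  define c where "c = min (gap_const a A C (card T) CARD('n)) (1 / 2)"
  define \<sigma>0 where "\<sigma>0 = exp (- (A + CARD('n))\<^sup>2)"
  have c: "0 < c" "c < 1"
    using gap_const_pos[OF assms(3), of C] assms(2) by (auto simp: c_def)
  have "c * \<sigma> \<le> \<bar>\<Delta> - mean_disc T \<sigma> z R V (C * \<sigma>) $ k\<bar> \<and> (\<forall>i. i \<noteq> k \<longrightarrow> mean_disc T \<sigma> z R V (C * \<sigma>) $ i = 0)"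
    if "0 < \<sigma>" "\<sigma> < \<sigma>0" "a * \<sigma> \<le> \<Delta>" "\<Delta> \<le> A * \<sigma>" "0 < V"
      and "z = \<Delta> *\<^sub>R axis k 1" "R = C * \<sigma> + C * \<sigma> * sqrt (ln (1 / \<sigma>))" for \<sigma> \<Delta> V z R
  proof
    have "(A + CARD('n)) * \<sigma> < R"
      using linear_less_log_radius[of "A + CARD('n)" C \<sigma>] that assms(2-4) by (simp add: \<sigma>0_def)
    then have "gap_const a A C (card T) CARD('n) * \<sigma> \<le> \<Delta> - mean_disc T \<sigma> z R V (C * \<sigma>) $ k"
      using mean_disc_gap[OF assms(1) _ assms(3)] that assms(2) by simp
    moreover have "c * \<sigma> \<le> gap_const a A C (card T) CARD('n) * \<sigma>"
      using that(1) by (simp add: c_def)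
    ultimately show "c * \<sigma> \<le> \<bar>\<Delta> - mean_disc T \<sigma> z R V (C * \<sigma>) $ k\<bar>"
      by linarith
    show "\<forall>i. i \<noteq> k \<longrightarrow> mean_disc T \<sigma> z R V (C * \<sigma>) $ i = 0"
      using that(1,5,6) by (intro allI impI mean_disc_nth_eq_0) (simp_all add: axis_def)
  qed
  then show ?thesis
    using c by (intro exI[of _ c] exI[of _ \<sigma>0]) (simp add: \<sigma>0_def Let_def)
qed

end
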